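(* Consider the clique inference problem with nonnegative vertex potentials and the Potts clique potential $C(\mathbf{v})=\lambda\sum_{v\in V}n_v(\mathbf{v})^2$ with $\lambda>0$. Let $\hat{\mathbf{v}}$ be the assignment returned by the $\alpha$-pass algorithm and $\mathbf{v}^*$ an assignment maximizing $F$. Then $F(\hat{\mathbf{v}})\ge\frac{13}{15}F(\mathbf{v}^* )$.
   Context: Clique inference problem: there are $n$ vertices $1,\dots,n$, a finite set $V$ of values ($|V|\ge 2$), real vertex potentials $\psi_{jv}$ ($1\le j\le n$, $v\in V$), and a clique potential $C$ depending only on the counts $n_v(\mathbf{v})=|\{j:v_j=v\}|$. The objective is $F(\mathbf{v})=\sum_{j=1}^n\psi_{jv_j}+C(\mathbf{v})$ over $\mathbf{v}\in V^n$. The $\alpha$-pass algorithm: for each $\alpha\in V$, sort the vertices in decreasing order of $\psi_{j\alpha}-\max_{v\neq\alpha}\psi_{jv}$; for each $k\in\{1,\dots,n\}$ form the assignment giving the first $k$ sorted vertices the value $\alpha$ and every other vertex a value $v\ne\alpha$ maximizing $\psi_{jv}$; output the formed assignment with the largest $F$ over all $\alpha$ and $k$. *)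

theory Defs
  imports Complex_Main
begin

definition assignments :: "nat \<Rightarrow> 'v set \<Rightarrow> (nat \<Rightarrow> 'v) set" where
  "assignments n V = {x. \<forall>j\<in>{1..n}. x j \<in> V}"

definition cnt :: "nat \<Rightarrow> (nat \<Rightarrow> 'v) \<Rightarrow> 'v \<Rightarrow> nat" where
  "cnt n x v = card {j \<in> {1..n}. x j = v}"

definition potts :: "real \<Rightarrow> nat \<Rightarrow> 'v set \<Rightarrow> (nat \<Rightarrow> 'v) \<Rightarrow> real" where
  "potts lam n V x = lam * (\<Sum>v\<in>V. (real (cnt n x v))^2)"

definition objF :: "nat \<Rightarrow> 'v set \<Rightarrow> (nat \<Rightarrow> 'v \<Rightarrow> real) \<Rightarrow> real \<Rightarrow> (nat \<Rightarrow> 'v) \<Rightarrow> real" where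
  "objF n V psi lam x = (\<Sum>j\<in>{1..n}. psi j (x j)) + potts lam n V x"

definition maxother :: "'v set \<Rightarrow> (nat \<Rightarrow> 'v \<Rightarrow> real) \<Rightarrow> 'v \<Rightarrow> nat \<Rightarrow> real" where
  "maxother V psi \<alpha> j = Max (psi j ` (V - {\<alpha>}))"

text \<open>Admissible tie-breaking choices of the alpha-pass algorithm:
  ord \<alpha> i is the i-th vertex in the sorted order for \<alpha> (a bijection of {1..n},
  sorted decreasingly by psi j \<alpha> - maxother), and best \<alpha> j is a value
  different from \<alpha> maximizing psi j.\<close>
definition valid_choices ::
  "nat \<Rightarrow> 'v set \<Rightarrow> (nat \<Rightarrow> 'v \<Rightarrow> real) \<Rightarrow> ('v \<Rightarrow> nat \<Rightarrow> nat) \<Rightarrow> ('v \<Rightarrow> nat \<Rightarrow> 'v) \<Rightarrow> bool" where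
  "valid_choices n V psi ord best \<longleftrightarrow>
     (\<forall>\<alpha>\<in>V.
        bij_betw (ord \<alpha>) {1..n} {1..n}
      \<and> (\<forall>i\<in>{1..n}. \<forall>i'\<in>{1..n}. i \<le> i' \<longrightarrow>
           psi (ord \<alpha> i') \<alpha> - maxother V psi \<alpha> (ord \<alpha> i')
             \<le> psi (ord \<alpha> i) \<alpha> - maxother V psi \<alpha> (ord \<alpha> i))
      \<and> (\<forall>j\<in>{1..n}. best \<alpha> j \<in> V - {\<alpha>} \<and> psi j (best \<alpha> j) = maxother V psi \<alpha> j))"

definition pass_assignment ::
  "nat \<Rightarrow> ('v \<Rightarrow> nat \<Rightarrow> nat) \<Rightarrow> ('v \<Rightarrow> nat \<Rightarrow> 'v) \<Rightarrow> 'v \<Rightarrow> nat \<Rightarrow> (nat \<Rightarrow> 'v)" where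
  "pass_assignment n ord best \<alpha> k =
     (\<lambda>j. if j \<in> ord \<alpha> ` {1..k} then \<alpha> else best \<alpha> j)"

definition alpha_pass_candidates ::
  "nat \<Rightarrow> 'v set \<Rightarrow> ('v \<Rightarrow> nat \<Rightarrow> nat) \<Rightarrow> ('v \<Rightarrow> nat \<Rightarrow> 'v) \<Rightarrow> (nat \<Rightarrow> 'v) set" where
  "alpha_pass_candidates n V ord best =
     {pass_assignment n ord best \<alpha> k | \<alpha> k. \<alpha> \<in> V \<and> k \<in> {1..n}}"

end

theory Submission
  imports Defs
begin

(* Write c v and P v for the size and the total vertex potential of the class of vertices
   that vstar labels v. Fix a in W, a subset of V, and let k be the total size of the classes
   in W. The alpha-pass candidate for alpha = a and this k beats relabelling all these classes
   by a: among all k-sets of vertices it gives a to one maximising the sum of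
   psi j a - maxother j, and its clique term is at least lam * k^2. As potentials are
   nonnegative, this gives
     F vhat >= (sum of P over V - W) + P a + lam * k^2.
   Let c1 >= c2 >= c3 be the three largest class sizes (c3 = 0 if there are only two values).
   The merges W = {1}; W = V with a = 1 and with a = 2; W = {1,2} with a = 2; and
   W = {1,2,3} with a = 3 give five such bounds, and a combination of them with nonnegative
   weights summing to 15 dominates 13 * F vstar; which combination works depends on whether
   6 c3 <= n and whether c1 + c2 + 2 c3 <= n. *)

lemma sum_le_sum_initial_segment:
  fixes g :: "nat \<Rightarrow> real"
  assumes antitone: "\<And>i i'. i \<in> {1..n} \<Longrightarrow> i' \<in> {1..n} \<Longrightarrow> i \<le> i' \<Longrightarrow> g i' \<le> g i"
    and I: "I \<subseteq> {1..n}"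
  shows "sum g I \<le> sum g {1..card I}"
proof (cases "card I = 0")
  case True
  then show ?thesis using I finite_subset by fastforce
next
  case False
  define k where "k = card I"
  have fI: "finite I" using I finite_subset by blast
  have k: "k \<in> {1..n}" using False card_mono[OF _ I] unfolding k_def by auto
  define A where "A = {1..k} - I"
  define B where "B = I - {1..k}"
  have "card A = card B"
    unfolding A_def B_def k_def using fI by (simp add: card_Diff_subset_Int Int_commute)
  \<comment> \<open>Exchange argument: the indices in B lie after k, those in A at or before k.\<close>
  have "sum g B \<le> (\<Sum>_\<in>B. g k)"
    using I k by (intro sum_mono antitone) (auto simp: B_def)
  also have "\<dots> = (\<Sum>_\<in>A. g k)" using \<open>card A = card B\<close> by simp
  also have "\<dots> \<le> sum g A"
    using k by (intro sum_mono antitone) (auto simp: A_def)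
  finally have "sum g B \<le> sum g A" .
  moreover have "sum g {1..k} = sum g ({1..k} \<inter> I) + sum g A"
    unfolding A_def by (rule sum.Int_Diff) simp
  moreover have "sum g I = sum g ({1..k} \<inter> I) + sum g B"
    unfolding B_def using sum.Int_Diff[OF fI, of g "{1..k}"] by (simp add: Int_commute)
  ultimately show ?thesis unfolding k_def by linarith
qed

lemma sum_le_sum_sorted_prefix:
  fixes d :: "'a \<Rightarrow> real"
  assumes bij: "bij_betw \<sigma> {1..n} A"
    and sorted: "\<And>i i'. i \<in> {1..n} \<Longrightarrow> i' \<in> {1..n} \<Longrightarrow> i \<le> i' \<Longrightarrow> d (\<sigma> i') \<le> d (\<sigma> i)"
    and U: "U \<subseteq> A"
  shows "sum d U \<le> sum d (\<sigma> ` {1..card U})"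
proof -
  define I where "I = {i \<in> {1..n}. \<sigma> i \<in> U}"
  have inj: "inj_on \<sigma> {1..n}" using bij by (simp add: bij_betw_def)
  have "U \<subseteq> \<sigma> ` {1..n}" using U bij by (simp add: bij_betw_def)
  then have UI: "U = \<sigma> ` I" unfolding I_def by blast
  have injI: "inj_on \<sigma> I" using inj by (rule inj_on_subset) (auto simp: I_def)
  have cI: "card I = card U" by (simp add: UI card_image[OF injI])
  have "I \<subseteq> {1..n}" by (auto simp: I_def)
  then have "card I \<le> n" using card_mono[of "{1..n}" I] by simp
  then have injk: "inj_on \<sigma> {1..card I}" by (intro inj_on_subset[OF inj]) simp
  have "sum d U = (\<Sum>i\<in>I. d (\<sigma> i))" by (simp add: UI sum.reindex[OF injI])
  also have "\<dots> \<le> (\<Sum>i\<in>{1..card I}. d (\<sigma> i))"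
    using sorted by (intro sum_le_sum_initial_segment[where n = n]) (auto simp: I_def)
  also have "\<dots> = sum d (\<sigma> ` {1..card U})" by (simp only: cI[symmetric] sum.reindex[OF injk] comp_def)
  finally show ?thesis .
qed

lemma sum_power2_le_bound_mult_sum:
  fixes f :: "'a \<Rightarrow> real"
  assumes "\<And>x. x \<in> A \<Longrightarrow> 0 \<le> f x" and "\<And>x. x \<in> A \<Longrightarrow> f x \<le> m"
  shows "(\<Sum>x\<in>A. (f x)^2) \<le> m * sum f A"
  unfolding sum_distrib_left power2_eq_square using assms by (intro sum_mono mult_right_mono) auto

lemma sum_power2_le_max_bounds:
  fixes f :: "'a \<Rightarrow> real"
  assumes fin: "finite A" and x: "x \<in> A"
    and nonneg: "\<And>y. y \<in> A \<Longrightarrow> 0 \<le> f y" and max: "\<And>y. y \<in> A \<Longrightarrow> f y \<le> f x"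
  shows "f x \<le> sum f A"
    and "(\<Sum>y\<in>A. (f y)^2) \<le> f x * sum f A"
    and "(\<Sum>y\<in>A. (f y)^2) \<le> (f x)^2 + (sum f A - f x)^2"
proof -
  show "f x \<le> sum f A" using fin x nonneg by (intro member_le_sum) auto
  show "(\<Sum>y\<in>A. (f y)^2) \<le> f x * sum f A"
    using nonneg max by (rule sum_power2_le_bound_mult_sum)
  have "(\<Sum>y\<in>A - {x}. (f y)^2) \<le> sum f (A - {x}) * sum f (A - {x})"
    using fin nonneg by (intro sum_power2_le_bound_mult_sum member_le_sum) auto
  then show "(\<Sum>y\<in>A. (f y)^2) \<le> (f x)^2 + (sum f A - f x)^2"
    using fin x by (simp add: sum.remove power2_eq_square)
qed

lemma finite_obtains_max_value:
  fixes f :: "'a \<Rightarrow> 'b::linorder"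
  assumes "finite A" and "A \<noteq> {}"
  obtains x where "x \<in> A" and "\<And>y. y \<in> A \<Longrightarrow> f y \<le> f x"
proof -
  have "Max (f ` A) \<in> f ` A" using assms by simp
  then obtain x where "x \<in> A" and "f x = Max (f ` A)" by (metis imageE)
  then show ?thesis using that assms by simp
qed

lemma finite_obtains_two_largest:
  fixes f :: "'a \<Rightarrow> 'b::linorder"
  assumes fin: "finite A" and two: "card A \<ge> 2"
  obtains x y where "x \<in> A" "y \<in> A" "y \<noteq> x"
    and "\<And>z. z \<in> A \<Longrightarrow> f z \<le> f x" and "\<And>z. z \<in> A - {x} \<Longrightarrow> f z \<le> f y"
proof -
  have "A \<noteq> {}" using two by auto
  then obtain x where x: "x \<in> A" and x_max: "\<And>z. z \<in> A \<Longrightarrow> f z \<le> f x"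
    using finite_obtains_max_value[OF fin] by metis
  have "card (A - {x}) \<ge> 1" using two fin x by simp
  then have "A - {x} \<noteq> {}" by (metis card.empty not_one_le_zero)
  then obtain y where y: "y \<in> A - {x}" and y_max: "\<And>z. z \<in> A - {x} \<Longrightarrow> f z \<le> f y"
    using finite_obtains_max_value[of "A - {x}"] fin by blast
  show ?thesis using x y by (intro that[OF x _ _ x_max y_max]) auto
qed

lemma sum_remove_two:
  assumes "finite A" and "x \<in> A" and "y \<in> A" and "y \<noteq> x"
  shows "sum f A = f x + f y + sum f (A - {x, y})"
proof -
  have "sum f A = f x + sum f (A - {x})" using assms by (intro sum.remove)
  also have "sum f (A - {x}) = f y + sum f (A - {x} - {y})" using assms by (intro sum.remove) auto
  finally show ?thesis by (simp add: Diff_insert2[symmetric] add.assoc)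
qed

lemma valid_choicesD:
  assumes "valid_choices n V psi ord best" and "\<alpha> \<in> V"
  shows "bij_betw (ord \<alpha>) {1..n} {1..n}"
    and "\<And>i i'. i \<in> {1..n} \<Longrightarrow> i' \<in> {1..n} \<Longrightarrow> i \<le> i' \<Longrightarrow>
           psi (ord \<alpha> i') \<alpha> - maxother V psi \<alpha> (ord \<alpha> i')
             \<le> psi (ord \<alpha> i) \<alpha> - maxother V psi \<alpha> (ord \<alpha> i)"
    and "\<And>j. j \<in> {1..n} \<Longrightarrow> best \<alpha> j \<in> V - {\<alpha>}"
    and "\<And>j. j \<in> {1..n} \<Longrightarrow> psi j (best \<alpha> j) = maxother V psi \<alpha> j"
  using assms unfolding valid_choices_def by blast+

lemma cnt_pass_assignment:
  assumes choices: "valid_choices n V psi ord best" and a: "a \<in> V" and k: "k \<le> n"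
  shows "cnt n (pass_assignment n ord best a k) a = k"
proof -
  note bij = valid_choicesD(1)[OF choices a]
  have "ord a ` {1..k} \<subseteq> {1..n}" using bij k by (auto simp: bij_betw_def)
  then have "{j \<in> {1..n}. pass_assignment n ord best a k j = a} = ord a ` {1..k}"
    using valid_choicesD(3)[OF choices a] by (auto simp: pass_assignment_def)
  moreover have "inj_on (ord a) {1..k}"
    using k by (intro inj_on_subset[OF bij_betw_imp_inj_on[OF bij]]) simp
  ultimately show ?thesis by (simp add: cnt_def card_image)
qed

lemma vertex_sum_pass_assignment_ge:
  assumes finV: "finite V" and choices: "valid_choices n V psi ord best" and a: "a \<in> V"
    and U: "U \<subseteq> {1..n}" and u: "\<forall>j\<in>{1..n} - U. u j \<in> V - {a}"
  shows "(\<Sum>j\<in>U. psi j a) + (\<Sum>j\<in>{1..n} - U. psi j (u j))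
         \<le> (\<Sum>j\<in>{1..n}. psi j (pass_assignment n ord best a (card U) j))"
proof -
  define mo where "mo = maxother V psi a"
  define d where "d j = psi j a - mo j" for j
  define T where "T = ord a ` {1..card U}"
  note bij = valid_choicesD(1)[OF choices a]
  have T: "T \<subseteq> {1..n}"
    using bij card_mono[OF _ U] by (auto simp: T_def bij_betw_def)
  \<comment> \<open>Relative to the baseline sum of all mo j, labelling a set W of vertices with a gains sum d W.\<close>
  have split: "(\<Sum>j\<in>W. psi j a) + (\<Sum>j\<in>{1..n} - W. mo j) = sum d W + sum mo {1..n}"
    if "W \<subseteq> {1..n}" for W
    using that sum.subset_diff[of W "{1..n}" mo] by (simp add: d_def sum_subtractf)
  have "sum d U \<le> sum d T"
    unfolding T_def using valid_choicesD(2)[OF choices a] U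
    by (intro sum_le_sum_sorted_prefix[OF bij]) (simp_all add: d_def mo_def)
  moreover have "(\<Sum>j\<in>{1..n} - U. psi j (u j)) \<le> (\<Sum>j\<in>{1..n} - U. mo j)"
    unfolding mo_def maxother_def using u finV by (intro sum_mono Max_ge) auto
  moreover have "(\<Sum>j\<in>{1..n}. psi j (pass_assignment n ord best a (card U) j))
      = (\<Sum>j\<in>T. psi j a) + (\<Sum>j\<in>{1..n} - T. mo j)"
  proof -
    let ?x = "pass_assignment n ord best a (card U)"
    have "(\<Sum>j\<in>T. psi j (?x j)) = (\<Sum>j\<in>T. psi j a)"
      by (intro sum.cong) (auto simp: pass_assignment_def T_def)
    moreover have "(\<Sum>j\<in>{1..n} - T. psi j (?x j)) = (\<Sum>j\<in>{1..n} - T. mo j)"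
      using valid_choicesD(4)[OF choices a]
      by (intro sum.cong) (auto simp: pass_assignment_def T_def mo_def)
    ultimately show ?thesis using sum.subset_diff[OF T, of "\<lambda>j. psi j (?x j)"] by simp
  qed
  ultimately show ?thesis using split[OF U] split[OF T] by linarith
qed

lemma objF_pass_assignment_ge:
  assumes finV: "finite V" and lam: "lam \<ge> 0" and choices: "valid_choices n V psi ord best"
    and a: "a \<in> V" and U: "U \<subseteq> {1..n}" and u: "\<forall>j\<in>{1..n} - U. u j \<in> V - {a}"
  shows "(\<Sum>j\<in>U. psi j a) + (\<Sum>j\<in>{1..n} - U. psi j (u j)) + lam * (real (card U))^2
         \<le> objF n V psi lam (pass_assignment n ord best a (card U))"
proof -
  let ?x = "pass_assignment n ord best a (card U)"
  have "cnt n ?x a = card U"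
    using card_mono[OF _ U] by (intro cnt_pass_assignment[OF choices a]) simp
  then have "(real (card U))^2 \<le> (\<Sum>v\<in>V. (real (cnt n ?x v))^2)"
    using member_le_sum[of a V "\<lambda>v. (real (cnt n ?x v))^2"] finV a by simp
  then have "lam * (real (card U))^2 \<le> potts lam n V ?x"
    unfolding potts_def using lam by (rule mult_left_mono)
  then show ?thesis
    using vertex_sum_pass_assignment_ge[OF finV choices a U u] by (simp add: objF_def)
qed

lemma pass_assignment_in_candidates:
  assumes "\<alpha> \<in> V" and "k \<in> {1..n}"
  shows "pass_assignment n ord best \<alpha> k \<in> alpha_pass_candidates n V ord best"
  using assms unfolding alpha_pass_candidates_def by blast

lemma card_vertices_with_value_in:
  assumes "finite W"
  shows "card {j \<in> {1..n}. x j \<in> W} = (\<Sum>v\<in>W. cnt n x v)"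
  unfolding cnt_def using assms
  by (subst card_UN_disjoint[symmetric]) (auto intro!: arg_cong[where f = card])

definition class_potential :: "nat \<Rightarrow> (nat \<Rightarrow> 'v \<Rightarrow> real) \<Rightarrow> (nat \<Rightarrow> 'v) \<Rightarrow> 'v \<Rightarrow> real" where
  "class_potential n psi x v = (\<Sum>j \<in> {j \<in> {1..n}. x j = v}. psi j v)"

lemma sum_class_potential:
  assumes "finite W"
  shows "(\<Sum>v\<in>W. class_potential n psi x v) = (\<Sum>j \<in> {j \<in> {1..n}. x j \<in> W}. psi j (x j))"
proof -
  have "(\<Sum>j \<in> {j \<in> {1..n}. x j \<in> W}. psi j (x j))
      = (\<Sum>v\<in>W. \<Sum>j \<in> {i \<in> {j \<in> {1..n}. x j \<in> W}. x i = v}. psi j (x j))"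
    using assms by (intro sum.group[symmetric]) auto
  also have "\<dots> = (\<Sum>v\<in>W. class_potential n psi x v)"
    unfolding class_potential_def by (intro sum.cong refl) auto
  finally show ?thesis ..
qed

lemma sum_cnt_assignment:
  assumes "finite V" and "x \<in> assignments n V"
  shows "(\<Sum>v\<in>V. cnt n x v) = n"
proof -
  have "{j \<in> {1..n}. x j \<in> V} = {1..n}" using assms(2) by (auto simp: assignments_def)
  then show ?thesis using card_vertices_with_value_in[OF assms(1), of n x] by simp
qed

lemma objF_eq_class_sums:
  assumes "finite V" and "x \<in> assignments n V"
  shows "objF n V psi lam x
    = (\<Sum>v\<in>V. class_potential n psi x v) + lam * (\<Sum>v\<in>V. (real (cnt n x v))^2)"
proof -
  have "{j \<in> {1..n}. x j \<in> V} = {1..n}" using assms(2) by (auto simp: assignments_def)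
  then show ?thesis using sum_class_potential[OF assms(1), of n psi x] by (simp add: objF_def potts_def)
qed

lemma objF_pass_assignment_ge_merged_classes:
  assumes finV: "finite V" and nonneg: "\<forall>j\<in>{1..n}. \<forall>v\<in>V. psi j v \<ge> 0" and lam: "lam \<ge> 0"
    and choices: "valid_choices n V psi ord best" and x: "x \<in> assignments n V"
    and a: "a \<in> W" and W: "W \<subseteq> V"
  shows "(\<Sum>v\<in>V - W. class_potential n psi x v) + class_potential n psi x a
           + lam * (\<Sum>v\<in>W. real (cnt n x v))^2
         \<le> objF n V psi lam (pass_assignment n ord best a (\<Sum>v\<in>W. cnt n x v))"
proof -
  define U where "U = {j \<in> {1..n}. x j \<in> W}"
  have finW: "finite W" using finV W by (rule finite_subset[rotated])
  have xV: "\<forall>j\<in>{1..n}. x j \<in> V" using x by (simp add: assignments_def)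
  have cU: "card U = (\<Sum>v\<in>W. cnt n x v)"
    unfolding U_def by (rule card_vertices_with_value_in[OF finW])
  have "{j \<in> {1..n}. x j \<in> V - W} = {1..n} - U" using xV by (auto simp: U_def)
  then have "(\<Sum>v\<in>V - W. class_potential n psi x v) = (\<Sum>j\<in>{1..n} - U. psi j (x j))"
    using finV by (simp add: sum_class_potential)
  moreover have "class_potential n psi x a \<le> (\<Sum>j\<in>U. psi j a)"
    unfolding class_potential_def using a W nonneg by (intro sum_mono2) (auto simp: U_def)
  moreover have "(\<Sum>j\<in>U. psi j a) + (\<Sum>j\<in>{1..n} - U. psi j (x j)) + lam * (real (card U))^2
      \<le> objF n V psi lam (pass_assignment n ord best a (card U))"
    using xV a W by (intro objF_pass_assignment_ge[OF finV lam choices]) (auto simp: U_def)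
  ultimately show ?thesis by (simp add: cU)
qed

lemma potts_ratio_small_third:
  fixes a b g N :: real
  assumes "b \<le> a" "g \<le> b" "0 \<le> g" "a + b + g \<le> N" "6 * g \<le> N"
  shows "13 * (a^2 + b^2 + g * (N - a - b)) \<le> 11 * a^2 + 2 * N^2 + 2 * (a + b)^2"
proof -
  have "0 \<le> a - b" "0 \<le> b - g" "0 \<le> g" "0 \<le> N - a - b - g" "0 \<le> N - 6 * g"
    using assms by auto
  \<comment> \<open>The difference of the two sides is a nonnegative combination of products of these slacks.\<close>
  then have "0 \<le> (a - b) * (a - b)" "0 \<le> (a - b) * (b - g)" "0 \<le> (a - b) * g"
    "0 \<le> (a - b) * (N - a - b - g)" "0 \<le> (a - b) * (N - 6 * g)" "0 \<le> (b - g) * (b - g)"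
    "0 \<le> (b - g) * g" "0 \<le> (b - g) * (N - a - b - g)" "0 \<le> (b - g) * (N - 6 * g)"
    "0 \<le> g * g" "0 \<le> g * (N - a - b - g)" "0 \<le> g * (N - 6 * g)"
    "0 \<le> (N - a - b - g) * (N - a - b - g)" "0 \<le> (N - a - b - g) * (N - 6 * g)"
    "0 \<le> (N - 6 * g) * (N - 6 * g)"
    by simp_all
  then show ?thesis unfolding power2_eq_square by (simp add: algebra_simps)
qed

lemma potts_ratio_large_third:
  fixes a b g N :: real
  assumes "b \<le> a" "g \<le> b" "0 \<le> g" "a + b + 2 * g \<le> N" "N \<le> 6 * g"
  shows "13 * (a^2 + b^2 + g * (N - a - b)) \<le> 12 * a^2 + 2 * N^2 + (a + b + g)^2"
proof -
  have "0 \<le> a - b" "0 \<le> b - g" "0 \<le> g" "0 \<le> N - a - b - 2 * g" "0 \<le> 6 * g - N"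
    using assms by auto
  then have "0 \<le> (a - b) * (a - b)" "0 \<le> (a - b) * (b - g)" "0 \<le> (a - b) * g"
    "0 \<le> (a - b) * (N - a - b - 2 * g)" "0 \<le> (a - b) * (6 * g - N)" "0 \<le> (b - g) * (b - g)"
    "0 \<le> (b - g) * g" "0 \<le> (b - g) * (N - a - b - 2 * g)" "0 \<le> (b - g) * (6 * g - N)"
    "0 \<le> g * g" "0 \<le> g * (N - a - b - 2 * g)" "0 \<le> g * (6 * g - N)"
    "0 \<le> (N - a - b - 2 * g) * (N - a - b - 2 * g)" "0 \<le> (N - a - b - 2 * g) * (6 * g - N)"
    "0 \<le> (6 * g - N) * (6 * g - N)"
    by simp_all
  then show ?thesis unfolding power2_eq_square by (simp add: algebra_simps)
qed

lemma potts_ratio_large_third_tight: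
  fixes a b g N :: real
  assumes "b \<le> a" "g \<le> b" "0 \<le> g" "a + b + g \<le> N" "N \<le> a + b + 2 * g" "N \<le> 6 * g"
  shows "13 * (a^2 + b^2 + g^2 + (N - a - b - g)^2) \<le> 12 * a^2 + 2 * N^2 + (a + b + g)^2"
proof -
  have "0 \<le> (a - b) * (a - b)" "0 \<le> (a - b) * (b - g)" "0 \<le> g * (a - b)"
    "0 \<le> (b - g) * (4 * g - (b - g))" "0 \<le> (N - a - b - g) * (4 * (a + b + g) - 11 * (N - a - b - g))"
    using assms by simp_all
  moreover have "12 * a^2 + 2 * N^2 + (a + b + g)^2 - 13 * (a^2 + b^2 + g^2 + (N - a - b - g)^2)
    = 2 * ((a - b) * (a - b)) + 10 * ((a - b) * (b - g)) + 16 * (g * (a - b))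
      + 2 * ((b - g) * (4 * g - (b - g))) + (N - a - b - g) * (4 * (a + b + g) - 11 * (N - a - b - g))"
    by (simp add: algebra_simps power2_eq_square)
  ultimately show ?thesis by linarith
qed

lemma potts_ratio_from_five_bounds:
  fixes lam P A B M a b g N Q :: real
  assumes lam: "lam > 0" and h1: "P + lam * a^2 \<le> M" and h2: "A + lam * N^2 \<le> M"
    and h3: "P - A + lam * (a + b)^2 \<le> M" and h4: "B + lam * N^2 \<le> M"
    and h5: "P - A - B + lam * (a + b + g)^2 \<le> M"
    and order: "b \<le> a" "g \<le> b" "0 \<le> g" "a + b + g \<le> N"
    and Q1: "Q \<le> a^2 + b^2 + g * (N - a - b)"
    and Q2: "Q \<le> a^2 + b^2 + g^2 + (N - a - b - g)^2"
  shows "13 * (P + lam * Q) \<le> 15 * M"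
proof (cases "6 * g \<le> N")
  case True
  then have "13 * Q \<le> 11 * a^2 + 2 * N^2 + 2 * (a + b)^2"
    using Q1 by (intro order_trans[OF _ potts_ratio_small_third[OF order True]]) simp
  then have "lam * (13 * Q) \<le> lam * (11 * a^2 + 2 * N^2 + 2 * (a + b)^2)"
    using lam by (intro mult_left_mono) auto
  then show ?thesis using h1 h2 h3 by (simp add: algebra_simps)
next
  case large_third: False
  have "13 * Q \<le> 12 * a^2 + 2 * N^2 + (a + b + g)^2"
  proof (cases "a + b + 2 * g \<le> N")
    case True
    then show ?thesis using Q1 large_third
      by (intro order_trans[OF _ potts_ratio_large_third[OF order(1-3) True]]) simp_all
  next
    case False
    then show ?thesis using Q2 large_third
      by (intro order_trans[OF _ potts_ratio_large_third_tight[OF order]]) simp_all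
  qed
  then have "lam * (13 * Q) \<le> lam * (12 * a^2 + 2 * N^2 + (a + b + g)^2)"
    using lam by (intro mult_left_mono) auto
  then show ?thesis using h1 h2 h4 h5 by (simp add: algebra_simps)
qed

lemma merge_bound_third_class:
  fixes c P :: "'v \<Rightarrow> real"
  assumes finV: "finite V" and al: "al \<in> V" and be: "be \<in> V" "be \<noteq> al"
    and c: "\<And>v. v \<in> V \<Longrightarrow> 0 \<le> c v" and P: "\<And>v. v \<in> V \<Longrightarrow> 0 \<le> P v"
    and c_al: "0 < c al" and be_max: "\<And>v. v \<in> V - {al, be} \<Longrightarrow> c v \<le> c be"
    and merge: "\<And>a W. a \<in> W \<Longrightarrow> W \<subseteq> V \<Longrightarrow> 0 < sum c W \<Longrightarrow>
                  sum P (V - W) + P a + lam * (sum c W)^2 \<le> M"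
  obtains g where "0 \<le> g" "g \<le> c be" "g \<le> sum c (V - {al, be})"
    and "sum P V - P al - P be + lam * (c al + c be + g)^2 \<le> M"
    and "(\<Sum>v\<in>V - {al, be}. (c v)^2) \<le> g * sum c (V - {al, be})"
    and "(\<Sum>v\<in>V - {al, be}. (c v)^2) \<le> g^2 + (sum c (V - {al, be}) - g)^2"
proof (cases "V - {al, be} = {}")
  case True
  have "sum P (V - {al, be}) + P be + lam * (c al + c be)^2 \<le> M"
    using merge[of be "{al, be}"] al be c_al c[OF be(1)] by simp
  then show ?thesis
    using P[OF be(1)] c[OF be(1)] sum_remove_two[OF finV al be, of P]
    by (intro that[of 0]) (simp_all add: True)
next
  case False
  define X where "X = V - {al, be}"
  have X: "finite X" "X \<subseteq> V" and cX: "\<And>v. v \<in> X \<Longrightarrow> 0 \<le> c v"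
    using finV c by (auto simp: X_def)
  obtain ga where ga: "ga \<in> X" and ga_max: "\<And>v. v \<in> X \<Longrightarrow> c v \<le> c ga"
    using finite_obtains_max_value[OF X(1) False[folded X_def]] by blast
  have "V - {al, be, ga} = X - {ga}" by (auto simp: X_def)
  moreover have "sum c {al, be, ga} = c al + c be + c ga" using be ga by (auto simp: X_def)
  moreover have "ga \<in> V" "0 \<le> c be" "0 \<le> c ga" using ga X c[OF be(1)] cX by auto
  ultimately have "sum P (X - {ga}) + P ga + lam * (c al + c be + c ga)^2 \<le> M"
    using merge[of ga "{al, be, ga}"] al be c_al by simp
  then have "sum P V - P al - P be + lam * (c al + c be + c ga)^2 \<le> M"
    using sum_remove_two[OF finV al be, of P] sum.remove[OF X(1) ga, of P] by (simp add: X_def)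
  moreover have "c ga \<le> c be" using ga be_max by (simp add: X_def)
  moreover note sum_power2_le_max_bounds[where f = c, OF X(1) ga cX ga_max]
  ultimately show ?thesis using cX[OF ga] unfolding X_def by (intro that) auto
qed

lemma ratio_bound_from_merge_bounds:
  fixes c P :: "'v \<Rightarrow> real"
  assumes finV: "finite V" and cardV: "card V \<ge> 2" and lam: "lam > 0"
    and c: "\<And>v. v \<in> V \<Longrightarrow> 0 \<le> c v" and P: "\<And>v. v \<in> V \<Longrightarrow> 0 \<le> P v"
    and total: "0 < sum c V"
    and merge: "\<And>a W. a \<in> W \<Longrightarrow> W \<subseteq> V \<Longrightarrow> 0 < sum c W \<Longrightarrow>
                  sum P (V - W) + P a + lam * (sum c W)^2 \<le> M"
  shows "13 * (sum P V + lam * (\<Sum>v\<in>V. (c v)^2)) \<le> 15 * M"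
proof -
  obtain al be where al: "al \<in> V" and be: "be \<in> V" "be \<noteq> al"
    and al_max: "\<And>v. v \<in> V \<Longrightarrow> c v \<le> c al" and be_max: "\<And>v. v \<in> V - {al} \<Longrightarrow> c v \<le> c be"
    using finite_obtains_two_largest[OF finV cardV] by metis
  have c_al: "0 < c al"
  proof (rule ccontr)
    assume "\<not> 0 < c al"
    then have "sum c V \<le> 0" using al_max by (intro sum_nonpos) force
    then show False using total by simp
  qed
  note V_split = sum_remove_two[OF finV al be]
  have h1: "sum P V + lam * (c al)^2 \<le> M"
    using merge[of al "{al}"] al c_al sum.remove[OF finV al, of P] by simp
  have h2: "P al + lam * (sum c V)^2 \<le> M" using merge[of al V] al total by simp
  have h3: "sum P V - P al + lam * (c al + c be)^2 \<le> M"
    using merge[of be "{al, be}"] al be c_al c[OF be(1)] V_split[of P] by simp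
  have h4: "P be + lam * (sum c V)^2 \<le> M" using merge[of be V] be total by simp
  obtain g where g: "0 \<le> g" "g \<le> c be" "g \<le> sum c (V - {al, be})"
    and h5: "sum P V - P al - P be + lam * (c al + c be + g)^2 \<le> M"
    and Q: "(\<Sum>v\<in>V - {al, be}. (c v)^2) \<le> g * sum c (V - {al, be})"
      "(\<Sum>v\<in>V - {al, be}. (c v)^2) \<le> g^2 + (sum c (V - {al, be}) - g)^2"
    using merge_bound_third_class[OF finV al be c P c_al _ merge] be_max by blast
  show ?thesis
    by (rule potts_ratio_from_five_bounds[OF lam h1 h2 h3 h4 h5])
      (use al_max be g Q in \<open>simp_all add: V_split\<close>)
qed

theorem theorem4:
  fixes n :: nat and V :: "'v set" and psi :: "nat \<Rightarrow> 'v \<Rightarrow> real" and lam :: real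
    and ord :: "'v \<Rightarrow> nat \<Rightarrow> nat" and best :: "'v \<Rightarrow> nat \<Rightarrow> 'v"
    and vhat vstar :: "nat \<Rightarrow> 'v"
  assumes finV: "finite V" and cardV: "card V \<ge> 2"
    and nonneg: "\<forall>j\<in>{1..n}. \<forall>v\<in>V. psi j v \<ge> 0"
    and lam_pos: "lam > 0"
    and choices: "valid_choices n V psi ord best"
    and vhat_cand: "vhat \<in> alpha_pass_candidates n V ord best"
    and vhat_max: "\<forall>x\<in>alpha_pass_candidates n V ord best. objF n V psi lam x \<le> objF n V psi lam vhat"
    and vstar_in: "vstar \<in> assignments n V"
    and vstar_opt: "\<forall>x\<in>assignments n V. objF n V psi lam x \<le> objF n V psi lam vstar"
  shows "objF n V psi lam vhat \<ge> 13 / 15 * objF n V psi lam vstar"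
proof -
  let ?c = "\<lambda>v. real (cnt n vstar v)" and ?P = "class_potential n psi vstar"
  have n: "n \<ge> 1" using vhat_cand by (auto simp: alpha_pass_candidates_def)
  note total = sum_cnt_assignment[OF finV vstar_in]
  have "13 * (sum ?P V + lam * (\<Sum>v\<in>V. (?c v)^2)) \<le> 15 * objF n V psi lam vhat"
  proof (rule ratio_bound_from_merge_bounds[OF finV cardV lam_pos])
    show "0 \<le> ?P v" if "v \<in> V" for v
      using nonneg that by (auto simp: class_potential_def intro: sum_nonneg)
    show "0 < sum ?c V" using n total by (simp flip: of_nat_sum)
    fix a W assume a: "a \<in> W" and W: "W \<subseteq> V" and pos: "0 < sum ?c W"
    let ?k = "\<Sum>v\<in>W. cnt n vstar v"
    have "?k \<le> n" using total sum_mono2[OF finV W, of "cnt n vstar"] by simp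
    with pos a W have "objF n V psi lam (pass_assignment n ord best a ?k) \<le> objF n V psi lam vhat"
      using vhat_max pass_assignment_in_candidates[of a V ?k n ord best] by (auto simp flip: of_nat_sum)
    with objF_pass_assignment_ge_merged_classes[OF finV nonneg less_imp_le[OF lam_pos] choices vstar_in a W]
    show "sum ?P (V - W) + ?P a + lam * (sum ?c W)^2 \<le> objF n V psi lam vhat"
      by (rule order_trans)
  qed simp
  then show ?thesis using objF_eq_class_sums[OF finV vstar_in] by simp
qed

end
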